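(* Any zero-error $O\left(\frac{n}{s}\right)$-pseudo-deterministic streaming algorithm for \textsc{Find-Duplicate} must use $\Omega\left(\frac{s}{\log n}\right)$ space.
   Context: \textsc{Find-Duplicate}: the input is a stream of $3n/2$ integers, each in $\{1,\dots,n\}$; the goal is to output an integer that appears at least twice in the stream. A randomized algorithm is zero-error if with probability one it either outputs a valid output or outputs $\bot$. An algorithm $A$ is $k$-pseudo-deterministic if for every valid input $x$ there is a set $S(x)$ of size at most $k$ such that $\Pr_r[A(x,r)\in S(x)]\ge \frac{k+1}{k+2}$. Space is measured in bits of memory of the one-pass streaming algorithm. *)

theory Defs
  imports "HOL-Probability.Probability"
begin

text \<open>A deterministic one-pass streaming algorithm: initial state, transition
  function (state, next stream symbol) to state, and an output function on the final
  state. Output None stands for bottom. States are natural numbers; an algorithm uses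
  S bits of memory if all its states lie in the range below 2 to the S.\<close>
type_synonym det_alg = "nat \<times> (nat \<Rightarrow> nat \<Rightarrow> nat) \<times> (nat \<Rightarrow> nat option)"

definition run_det :: "det_alg \<Rightarrow> nat list \<Rightarrow> nat option" where
  "run_det D xs = (case D of (q0, delta, out) \<Rightarrow> out (foldl delta q0 xs))"

text \<open>A randomized streaming algorithm is a probability distribution over
  deterministic ones (the random string selects the deterministic algorithm).\<close>
type_synonym rand_alg = "det_alg pmf"

definition fd_input :: "nat \<Rightarrow> nat list \<Rightarrow> bool" where
  "fd_input n xs \<longleftrightarrow> length xs = 3 * n div 2 \<and> set xs \<subseteq> {1..n}"

definition is_dup :: "nat list \<Rightarrow> nat \<Rightarrow> bool" where
  "is_dup xs a \<longleftrightarrow> 2 \<le> length (filter (\<lambda>y. y = a) xs)"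

definition zero_error :: "nat \<Rightarrow> rand_alg \<Rightarrow> bool" where
  "zero_error n A \<longleftrightarrow> (\<forall>xs. fd_input n xs \<longrightarrow>
     (\<forall>D\<in>set_pmf A. case run_det D xs of None \<Rightarrow> True | Some a \<Rightarrow> is_dup xs a))"

definition pseudo_det :: "nat \<Rightarrow> nat \<Rightarrow> rand_alg \<Rightarrow> bool" where
  "pseudo_det n k A \<longleftrightarrow> (\<forall>xs. fd_input n xs \<longrightarrow>
     (\<exists>S. finite S \<and> card S \<le> k \<and> S \<subseteq> {a. is_dup xs a} \<and>
        measure_pmf.prob A {D. \<exists>a\<in>S. run_det D xs = Some a}
          \<ge> (real k + 1) / (real k + 2)))"

definition uses_space :: "nat \<Rightarrow> nat \<Rightarrow> rand_alg \<Rightarrow> bool" where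
  "uses_space n S A \<longleftrightarrow> (\<forall>D\<in>set_pmf A. case D of (q0, delta, out) \<Rightarrow>
     q0 < 2 ^ S \<and> (\<forall>q < 2 ^ S. \<forall>a\<in>{1..n}. delta q a < 2 ^ S))"

end

theory Submission
  imports Defs
begin

(* Fix a zero-error k-pseudo-deterministic algorithm using S bits and let r = n/(4k).
  Consider streams listing an m-subset X of {1..n} in increasing order, followed by
  l = n - kr distinct elements avoiding a set K; their duplicates are the elements of X
  that occur in the suffix. Starting from K = {}, r times add to K the canonical output set
  of the current stream: this yields r distinct elements of X, each output with high
  probability on its stream. Sampling t ~ log r deterministic algorithms from the
  distribution, for at least half of all sets X every round is answered by one of the
  samples. By zero error, every output on any such continuation lies in X, so the t memory
  states reached after reading X determine r elements of X. Hence half of the (n choose m)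
  sets X are covered by 2^(St) * ((n-r) choose (m-r)) sets, which gives
  (4/3)^r <= 2^(St+1) and S = Omega(r / log n) = Omega(n / (k log n)). *)

lemma exists_sample_covering_half:
  fixes A :: "'a pmf" and V :: "'u set"
  assumes fin: "finite V" and prob: "\<forall>u\<in>V. measure_pmf.prob A {D. P D u} \<ge> 1/2"
  shows "\<exists>D\<in>set_pmf A. 2 * card {u\<in>V. \<not> P D u} \<le> card V"
proof (rule ccontr)
  let ?miss = "\<lambda>D. real (card {u\<in>V. \<not> P D u})"
  assume "\<not> ?thesis"
  then have many: "\<forall>D\<in>set_pmf A. card V + 1 \<le> 2 * card {u\<in>V. \<not> P D u}" by auto
  have int: "integrable (measure_pmf A) (indicator {D. \<not> P D u} :: _ \<Rightarrow> real)" for u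
    by (rule measure_pmf.integrable_const_bound[where B=1]) auto
  have "measure_pmf.expectation A ?miss
      = measure_pmf.expectation A (\<lambda>D. \<Sum>u\<in>V. indicator {D. \<not> P D u} D)"
    by (simp add: fin indicator_def Int_def)
  also have "\<dots> = (\<Sum>u\<in>V. measure_pmf.prob A {D. \<not> P D u})"
    by (simp add: Bochner_Integration.integral_sum int)
  also have "\<dots> \<le> (\<Sum>u\<in>V. 1/2)"
  proof (rule sum_mono)
    fix u assume "u \<in> V"
    moreover have "measure_pmf.prob A {D. \<not> P D u} = 1 - measure_pmf.prob A {D. P D u}"
      using measure_pmf.prob_compl[of "{D. P D u}" A]
      by (simp add: Compl_eq_Diff_UNIV[symmetric] Collect_neg_eq)
    ultimately show "measure_pmf.prob A {D. \<not> P D u} \<le> 1/2" using prob by auto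
  qed
  finally have upper: "measure_pmf.expectation A ?miss \<le> card V / 2" by simp
  have "(card V + 1) / 2 \<le> measure_pmf.expectation A ?miss"
  proof (rule measure_pmf.integral_ge_const)
    show "integrable (measure_pmf A) ?miss"
      by (rule measure_pmf.integrable_const_bound[where B="card V"])
        (auto intro!: card_mono fin)
    show "AE D in measure_pmf A. (card V + 1) / 2 \<le> ?miss D"
      using many by (auto simp: AE_measure_pmf_iff)
  qed
  with upper show False by simp
qed

lemma exists_samples_leaving_few_uncovered:
  fixes A :: "'a pmf" and U :: "'u set"
  assumes fin: "finite U" and prob: "\<forall>u\<in>U. measure_pmf.prob A {D. P D u} \<ge> 1/2"
  shows "\<exists>Ds. length Ds = t \<and> set Ds \<subseteq> set_pmf A \<and>
           2 ^ t * card {u\<in>U. \<forall>D\<in>set Ds. \<not> P D u} \<le> card U"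
proof (induction t)
  case 0
  show ?case by (auto intro!: card_mono fin)
next
  case (Suc t)
  then obtain Ds where Ds: "length Ds = t" "set Ds \<subseteq> set_pmf A"
     "2 ^ t * card {u\<in>U. \<forall>D\<in>set Ds. \<not> P D u} \<le> card U" by blast
  let ?V = "{u\<in>U. \<forall>D\<in>set Ds. \<not> P D u}"
  obtain D where D: "D \<in> set_pmf A" "2 * card {u\<in>?V. \<not> P D u} \<le> card ?V"
    using exists_sample_covering_half[of ?V A P] fin prob by auto
  have "2 ^ Suc t * card {u\<in>U. \<forall>D'\<in>set (D # Ds). \<not> P D' u} = 2 ^ t * (2 * card {u\<in>?V. \<not> P D u})"
    by (simp add: conj_commute conj_left_commute)
  also have "\<dots> \<le> card U" using D(2) Ds(3) by (meson le_trans mult_le_mono2)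
  finally show ?case using Ds D by (intro exI[of _ "D # Ds"]) auto
qed

lemma exists_samples_covering_most_rows:
  fixes A :: "'a pmf" and F :: "'x set" and r t :: nat
  assumes fin: "finite F" and prob: "\<forall>X\<in>F. \<forall>j<r. measure_pmf.prob A {D. P D X j} \<ge> 1/2"
    and t: "2 * r \<le> 2 ^ t"
  shows "\<exists>Ds. length Ds = t \<and> set Ds \<subseteq> set_pmf A \<and>
           card F \<le> 2 * card {X\<in>F. \<forall>j<r. \<exists>D\<in>set Ds. P D X j}"
proof -
  let ?U = "F \<times> {..<r}"
  have "finite ?U" using fin by (simp add: finite_cartesian_product)
  then obtain Ds where Ds: "length Ds = t" "set Ds \<subseteq> set_pmf A"
      "2 ^ t * card {u\<in>?U. \<forall>D\<in>set Ds. \<not> P D (fst u) (snd u)} \<le> card ?U"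
    using exists_samples_leaving_few_uncovered[of ?U A "\<lambda>D u. P D (fst u) (snd u)" t] prob
    by auto
  define Good where "Good = {X\<in>F. \<forall>j<r. \<exists>D\<in>set Ds. P D X j}"
  let ?Bad = "{u\<in>?U. \<forall>D\<in>set Ds. \<not> P D (fst u) (snd u)}"
  have "F - Good \<subseteq> fst ` ?Bad" unfolding Good_def by force
  moreover have "finite ?Bad" using \<open>finite ?U\<close> by simp
  ultimately have "card (F - Good) \<le> card ?Bad"
    by (meson card_image_le card_mono finite_imageI le_trans)
  then have "2 * r * card (F - Good) \<le> 2 ^ t * card ?Bad"
    using t by (rule mult_le_mono[rotated])
  also have "\<dots> \<le> r * card F" using Ds(3) by (simp add: card_cartesian_product mult.commute)
  finally have "r * (2 * card (F - Good)) \<le> r * card F" by (simp add: mult_ac)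
  moreover have "r = 0 \<Longrightarrow> card (F - Good) = 0" unfolding Good_def by auto
  ultimately have "2 * card (F - Good) \<le> card F" by (cases "r = 0") simp_all
  moreover have "card F = card Good + card (F - Good)"
    using fin by (simp add: Good_def card_Diff_subset card_mono)
  ultimately show ?thesis using Ds by (intro exI[of _ Ds]) (simp add: Good_def)
qed

lemma binomial_ge_ratio_power_mult:
  "r \<le> m \<Longrightarrow> m \<le> n \<Longrightarrow> (real n / real m) ^ r * real ((n - r) choose (m - r)) \<le> real (n choose m)"
proof (induction r arbitrary: n m)
  case 0
  then show ?case by simp
next
  case (Suc r)
  then have m: "1 \<le> m" by simp
  have absorb: "real m * real (n choose m) = real n * real ((n - 1) choose (m - 1))"
    using times_binomial_minus1_eq[of m n] m by (metis of_nat_mult less_le_trans zero_less_one)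
  have IH: "(real (n - 1) / real (m - 1)) ^ r * real ((n - 1 - r) choose (m - 1 - r))
      \<le> real ((n - 1) choose (m - 1))"
    using Suc.prems by (intro Suc.IH) auto
  have "(real n / real m) ^ r \<le> (real (n - 1) / real (m - 1)) ^ r"
  proof (cases "r = 0")
    case False
    then have "2 \<le> m" using Suc by simp
    then have "real n / real m \<le> real (n - 1) / real (m - 1)"
      using Suc.prems by (simp add: divide_simps of_nat_diff) (simp add: algebra_simps)
    then show ?thesis by (intro power_mono) auto
  qed simp
  then have "(real n / real m) ^ r * real ((n - 1 - r) choose (m - 1 - r)) \<le> real ((n - 1) choose (m - 1))"
    using IH by (meson dual_order.trans mult_right_mono of_nat_0_le_iff)
  then have "real n / real m * ((real n / real m) ^ r * real ((n - 1 - r) choose (m - 1 - r)))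
       \<le> real n / real m * real ((n - 1) choose (m - 1))"
    by (intro mult_left_mono) auto
  also have "\<dots> = real (n choose m)" using absorb m by (simp add: field_simps)
  finally show ?case by (simp add: mult.assoc diff_diff_left del: of_nat_diff)
qed

lemma binomial_ge_four_thirds_power_mult:
  assumes "r \<le> m" "4 * m \<le> 3 * n"
  shows "(4/3) ^ r * real ((n - r) choose (m - r)) \<le> real (n choose m)"
proof (cases "m = 0")
  case False
  then have "(4/3 :: real) ^ r \<le> (real n / real m) ^ r"
    using assms(2) by (intro power_mono) (auto simp: divide_simps)
  then have "(4/3) ^ r * real ((n - r) choose (m - r)) \<le> (real n / real m) ^ r * real ((n - r) choose (m - r))"
    by (intro mult_right_mono) auto
  also have "\<dots> \<le> real (n choose m)"
    using assms by (intro binomial_ge_ratio_power_mult) auto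
  finally show ?thesis .
qed (use assms in simp)

lemma card_supersets_le_binomial:
  assumes U: "finite U" and R: "r \<le> card R"
  shows "card {X. X \<subseteq> U \<and> card X = m \<and> R \<subseteq> X} \<le> (card U - r) choose (m - r)"
proof (cases "R \<subseteq> U")
  case False
  then have no_superset: "{X. X \<subseteq> U \<and> card X = m \<and> R \<subseteq> X} = {}" by blast
  show ?thesis unfolding no_superset by simp
next
  case True
  obtain R' where R': "R' \<subseteq> R" "card R' = r" using obtain_subset_with_card_n[OF R] by blast
  have finR': "finite R'" using R' True U by (meson finite_subset subset_trans)
  let ?P = "{X. X \<subseteq> U \<and> card X = m \<and> R \<subseteq> X}"
  let ?T = "{Y. Y \<subseteq> U - R' \<and> card Y = m - r}"
  have "card ?P \<le> card ?T"
  proof (rule card_inj_on_le[where f="\<lambda>X. X - R'"])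
    show "inj_on (\<lambda>X. X - R') ?P"
      using R' by (auto simp: inj_on_def)
    have "card (X - R') = m - r" if "X \<in> ?P" for X
      using that R' finR' by (simp add: card_Diff_subset subset_trans)
    then show "(\<lambda>X. X - R') ` ?P \<subseteq> ?T" by auto
    show "finite ?T" using U by auto
  qed
  also have "card ?T = card (U - R') choose (m - r)" using U by (intro n_subsets) auto
  also have "card (U - R') = card U - r" using True R' finR' by (simp add: card_Diff_subset)
  finally show ?thesis .
qed

lemma card_le_card_codes_mult_binomial:
  assumes U: "finite U" and Q: "finite Q"
    and code: "\<And>X. X \<in> G \<Longrightarrow> X \<subseteq> U \<and> card X = m \<and> code X \<in> Q \<and>
                       decode (code X) \<subseteq> X \<and> r \<le> card (decode (code X))"
  shows "card G \<le> card Q * ((card U - r) choose (m - r))"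
proof -
  define Piece where "Piece q = {X. X \<subseteq> U \<and> card X = m \<and> decode q \<subseteq> X}" for q
  let ?Q = "{q\<in>Q. r \<le> card (decode q)}"
  have "X \<in> Piece (code X)" "code X \<in> ?Q" if "X \<in> G" for X
    using code[OF that] unfolding Piece_def by auto
  then have "G \<subseteq> (\<Union>q\<in>?Q. Piece q)" by blast
  moreover have "(\<Union>q\<in>?Q. Piece q) \<subseteq> Pow U" unfolding Piece_def by blast
  then have "finite (\<Union>q\<in>?Q. Piece q)" using U by (meson finite_Pow_iff finite_subset)
  ultimately have "card G \<le> card (\<Union>q\<in>?Q. Piece q)" by (rule card_mono[rotated])
  also have "\<dots> \<le> (\<Sum>q\<in>?Q. card (Piece q))" using Q by (intro card_UN_le) simp
  also have "\<dots> \<le> (\<Sum>q\<in>?Q. (card U - r) choose (m - r))"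
    unfolding Piece_def using U by (intro sum_mono card_supersets_le_binomial) auto
  also have "\<dots> \<le> card Q * ((card U - r) choose (m - r))"
    using Q by (simp add: card_mono)
  finally show ?thesis .
qed

lemma inj_on_new_elements_of_chain:
  fixes K :: "nat \<Rightarrow> 'a set"
  assumes "mono K" and new: "\<And>j. j < r \<Longrightarrow> f j \<in> K (Suc j) - K j"
  shows "inj_on f {..<r}"
proof -
  have "f i \<noteq> f j" if "i < j" "j < r" for i j
  proof -
    have "f i \<in> K j" using new[of i] monoD[OF assms(1), of "Suc i" j] that by auto
    then show ?thesis using new[of j] that by auto
  qed
  then show ?thesis by (metis inj_onI lessThan_iff linorder_neqE_nat)
qed

definition state_after :: "det_alg \<Rightarrow> nat list \<Rightarrow> nat" where
  "state_after D xs = foldl (fst (snd D)) (fst D) xs"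

definition run_from :: "det_alg \<Rightarrow> nat \<Rightarrow> nat list \<Rightarrow> nat option" where
  "run_from D q ys = snd (snd D) (foldl (fst (snd D)) q ys)"

lemma run_det_eq_output_state_after: "run_det D xs = snd (snd D) (state_after D xs)"
  unfolding run_det_def state_after_def by (auto split: prod.splits)

lemma run_det_append: "run_det D (xs @ ys) = run_from D (state_after D xs) ys"
  by (simp add: run_det_eq_output_state_after run_from_def state_after_def)

lemma state_after_less:
  assumes "uses_space n S A" "D \<in> set_pmf A" "set xs \<subseteq> {1..n}"
  shows "state_after D xs < 2 ^ S"
proof -
  obtain q0 delta out where D: "D = (q0, delta, out)" by (cases D) auto
  then have "q0 < 2 ^ S" and delta: "\<forall>q < 2 ^ S. \<forall>a\<in>{1..n}. delta q a < 2 ^ S"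
    using assms unfolding uses_space_def by fastforce+
  then show ?thesis
    using assms(3) unfolding D state_after_def by (induction xs arbitrary: q0) auto
qed

lemma is_dup_imp_mem: "is_dup xs a \<Longrightarrow> a \<in> set xs"
proof (rule ccontr)
  assume "is_dup xs a" "a \<notin> set xs"
  then have "filter (\<lambda>y. y = a) xs = []" by (auto simp: filter_empty_conv)
  with \<open>is_dup xs a\<close> show False unfolding is_dup_def by simp
qed

lemma is_dup_append_distinct:
  assumes "distinct xs" "distinct ys" "is_dup (xs @ ys) a"
  shows "a \<in> set xs \<and> a \<in> set ys"
proof -
  have count: "length (filter (\<lambda>y. y = a) zs) = (if a \<in> set zs then 1 else 0)" if "distinct zs"
    for zs :: "nat list"
    using that by (induction zs) auto
  show ?thesis
    using assms count[OF assms(1)] count[OF assms(2)] unfolding is_dup_def by (auto split: if_splits)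
qed

lemma fd_input_replicate: "1 \<le> a \<Longrightarrow> a \<le> n \<Longrightarrow> fd_input n (replicate (3 * n div 2) a)"
  unfolding fd_input_def by auto

lemma is_dup_replicate: "is_dup (replicate L a) b \<Longrightarrow> b = a"
  unfolding is_dup_def by (cases "b = a") auto

lemma pseudo_det_pos:
  assumes "1 \<le> n" "pseudo_det n k A"
  shows "1 \<le> k"
proof (rule ccontr)
  assume "\<not> 1 \<le> k"
  then have k: "k = 0" by simp
  obtain S where "finite S" "card S \<le> k"
    "measure_pmf.prob A {D. \<exists>a\<in>S. run_det D (replicate (3 * n div 2) 1) = Some a}
       \<ge> (real k + 1) / (real k + 2)"
    using assms fd_input_replicate[of 1 n] unfolding pseudo_det_def by blast
  moreover from this k have "S = {}" by simp
  ultimately show False using k by simp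
qed

text \<open>With a single memory state the output cannot depend on the input, but the constant
  streams of 1s and of 2s have no duplicate in common, so a zero-error algorithm always
  outputs bottom, contradicting pseudo-determinism.\<close>
lemma not_uses_space_zero:
  assumes n: "2 \<le> n" and ze: "zero_error n A" and pd: "pseudo_det n k A"
  shows "\<not> uses_space n 0 A"
proof
  assume us: "uses_space n 0 A"
  define ones where "ones = replicate (3 * n div 2) (1::nat)"
  define twos where "twos = replicate (3 * n div 2) (2::nat)"
  have fd: "fd_input n ones" "fd_input n twos"
    unfolding ones_def twos_def using fd_input_replicate n by auto
  have bot: "run_det D ones = None" if D: "D \<in> set_pmf A" for D
  proof (cases "run_det D ones")
    case (Some a)
    have "state_after D xs = 0" if "fd_input n xs" for xs
      using state_after_less[OF us D] that unfolding fd_input_def by simp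
    then have "run_det D twos = run_det D ones"
      using fd by (simp add: run_det_eq_output_state_after)
    then have "is_dup ones a" "is_dup twos a"
      using ze D fd Some unfolding zero_error_def by (metis option.simps(5))+
    then have "a = 1" "a = 2" unfolding ones_def twos_def using is_dup_replicate by blast+
    then show ?thesis by simp
  qed
  obtain S where S: "measure_pmf.prob A {D. \<exists>a\<in>S. run_det D ones = Some a} \<ge> (real k + 1) / (real k + 2)"
    using pd fd unfolding pseudo_det_def by blast
  have "set_pmf A \<inter> {D. \<exists>a\<in>S. run_det D ones = Some a} = {}" using bot by auto
  then have "measure_pmf.prob A {D. \<exists>a\<in>S. run_det D ones = Some a} = 0"
    by (simp add: measure_pmf_zero_iff)
  moreover have "(real k + 1) / (real k + 2) > 0" by simp
  ultimately show False using S by linarith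
qed

locale find_duplicate_adversary =
  fixes n k r :: nat and A :: rand_alg
  assumes zero_error: "zero_error n A" and pseudo_det: "pseudo_det n k A"
    and k_pos: "1 \<le> k" and r_pos: "1 \<le> r" and four_k_r_le: "4 * k * r \<le> n"
begin

definition suffix_length :: nat where
  "suffix_length = n - k * r"

definition prefix_size :: nat where
  "prefix_size = 3 * n div 2 - suffix_length"

lemma prefix_suffix_sizes:
  "prefix_size + suffix_length = 3 * n div 2" "suffix_length + k * r = n"
  "r \<le> prefix_size" "4 * prefix_size \<le> 3 * n"
proof -
  have "r \<le> k * r" using k_pos by simp
  moreover have "n \<le> 3 * n div 2" "2 * (3 * n div 2) \<le> 3 * n" by auto
  ultimately show "prefix_size + suffix_length = 3 * n div 2" "suffix_length + k * r = n"
    "r \<le> prefix_size" "4 * prefix_size \<le> 3 * n"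
    using four_k_r_le unfolding prefix_size_def suffix_length_def by arith+
qed

definition Prefixes :: "nat set set" where
  "Prefixes = {X. X \<subseteq> {1..n} \<and> card X = prefix_size}"

definition Avoided :: "nat set set" where
  "Avoided = {K. K \<subseteq> {1..n} \<and> card K \<le> k * r}"

definition fresh_suffix :: "nat set \<Rightarrow> nat list" where
  "fresh_suffix K = take suffix_length (sorted_list_of_set ({1..n} - K))"

definition stream :: "nat set \<Rightarrow> nat set \<Rightarrow> nat list" where
  "stream X K = sorted_list_of_set X @ fresh_suffix K"

lemma fd_input_stream:
  assumes "X \<in> Prefixes" "K \<in> Avoided"
  shows "fd_input n (stream X K)"
proof -
  have "finite K" "finite X" using assms finite_subset
    unfolding Prefixes_def Avoided_def by auto
  moreover have "n - card K \<le> card ({1..n} - K)"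
    using diff_card_le_card_Diff[OF \<open>finite K\<close>, of "{1..n}"] by simp
  ultimately show ?thesis
    using assms prefix_suffix_sizes(1,2)
    unfolding fd_input_def stream_def fresh_suffix_def Prefixes_def Avoided_def
    by (auto dest: in_set_takeD)
qed

lemma is_dup_stream:
  assumes "finite X" "is_dup (stream X K) a"
  shows "a \<in> X" "a \<notin> K"
proof -
  have "a \<in> set (sorted_list_of_set X) \<and> a \<in> set (fresh_suffix K)"
    using assms by (intro is_dup_append_distinct) (auto simp: stream_def fresh_suffix_def)
  then show "a \<in> X" "a \<notin> K"
    using assms(1) by (auto simp: fresh_suffix_def dest: in_set_takeD)
qed

definition canonical :: "nat list \<Rightarrow> nat set" where
  "canonical xs = (SOME S. finite S \<and> card S \<le> k \<and> S \<subseteq> {a. is_dup xs a} \<and>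
      measure_pmf.prob A {D. \<exists>a\<in>S. run_det D xs = Some a} \<ge> (real k + 1) / (real k + 2))"

lemma canonical:
  assumes "fd_input n xs"
  shows "finite (canonical xs)" "card (canonical xs) \<le> k" "canonical xs \<subseteq> {a. is_dup xs a}"
    "measure_pmf.prob A {D. \<exists>a\<in>canonical xs. run_det D xs = Some a} \<ge> (real k + 1) / (real k + 2)"
proof -
  have "\<exists>S. finite S \<and> card S \<le> k \<and> S \<subseteq> {a. is_dup xs a} \<and>
      measure_pmf.prob A {D. \<exists>a\<in>S. run_det D xs = Some a} \<ge> (real k + 1) / (real k + 2)"
    using pseudo_det assms unfolding pseudo_det_def by blast
  from someI_ex[OF this] show "finite (canonical xs)" "card (canonical xs) \<le> k"
    "canonical xs \<subseteq> {a. is_dup xs a}"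
    "measure_pmf.prob A {D. \<exists>a\<in>canonical xs. run_det D xs = Some a} \<ge> (real k + 1) / (real k + 2)"
    unfolding canonical_def by blast+
qed

primrec chain :: "nat set \<Rightarrow> nat \<Rightarrow> nat set" where
  "chain X 0 = {}"
| "chain X (Suc j) = chain X j \<union> canonical (stream X (chain X j))"

lemma mono_chain: "mono (chain X)"
  unfolding mono_iff_le_Suc by auto

lemma chain_bounds:
  assumes X: "X \<in> Prefixes"
  shows "j \<le> r \<Longrightarrow> chain X j \<subseteq> {1..n} \<and> card (chain X j) \<le> k * j"
proof (induction j)
  case 0
  show ?case by simp
next
  case (Suc j)
  then have IH: "chain X j \<subseteq> {1..n}" "card (chain X j) \<le> k * j" by simp_all
  moreover have "card (chain X j) \<le> k * r" using IH(2) mult_le_mono2[of j r k] Suc.prems by linarith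
  ultimately have "chain X j \<in> Avoided" unfolding Avoided_def by simp
  then have fd: "fd_input n (stream X (chain X j))" by (rule fd_input_stream[OF X])
  have "canonical (stream X (chain X j)) \<subseteq> {1..n}"
    using canonical(3)[OF fd] is_dup_imp_mem fd unfolding fd_input_def by blast
  moreover have "card (chain X (Suc j)) \<le> card (chain X j) + card (canonical (stream X (chain X j)))"
    by (simp add: card_Un_le)
  ultimately show ?case using IH canonical(2)[OF fd] by simp
qed

lemma chain_in_Avoided:
  assumes "X \<in> Prefixes" "j \<le> r"
  shows "chain X j \<in> Avoided"
proof -
  have "card (chain X j) \<le> k * r"
    using chain_bounds[OF assms] mult_le_mono2[OF assms(2), of k] by linarith
  then show ?thesis using chain_bounds[OF assms] unfolding Avoided_def by simp
qed

definition covered :: "det_alg \<Rightarrow> nat set \<Rightarrow> nat \<Rightarrow> bool" where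
  "covered D X j \<longleftrightarrow>
     (\<exists>a\<in>canonical (stream X (chain X j)). run_det D (stream X (chain X j)) = Some a)"

lemma prob_covered:
  assumes "X \<in> Prefixes" "j < r"
  shows "1/2 \<le> measure_pmf.prob A {D. covered D X j}"
proof -
  have "1/2 \<le> (real k + 1) / (real k + 2)" by (simp add: divide_simps)
  also have "\<dots> \<le> measure_pmf.prob A {D. covered D X j}"
    using canonical(4)[OF fd_input_stream[OF assms(1) chain_in_Avoided]] assms
    unfolding covered_def by simp
  finally show ?thesis .
qed

definition states :: "det_alg list \<Rightarrow> nat set \<Rightarrow> nat list" where
  "states Ds X = map (\<lambda>D. state_after D (sorted_list_of_set X)) Ds"

text \<open>These outputs depend on the prefix X only through the states of the samples after
  reading it, which is what turns X into an S t bit code.\<close>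
definition outputs :: "det_alg list \<Rightarrow> nat list \<Rightarrow> nat set" where
  "outputs Ds qs = {a. \<exists>i<length Ds. \<exists>K\<in>Avoided. run_from (Ds ! i) (qs ! i) (fresh_suffix K) = Some a}"

lemma mem_outputs_states_iff:
  "a \<in> outputs Ds (states Ds X) \<longleftrightarrow> (\<exists>D\<in>set Ds. \<exists>K\<in>Avoided. run_det D (stream X K) = Some a)"
proof
  assume "a \<in> outputs Ds (states Ds X)"
  then obtain i K where "i < length Ds" "K \<in> Avoided"
    "run_from (Ds ! i) (states Ds X ! i) (fresh_suffix K) = Some a"
    unfolding outputs_def by blast
  then show "\<exists>D\<in>set Ds. \<exists>K\<in>Avoided. run_det D (stream X K) = Some a"
    by (intro bexI[of _ "Ds ! i"] bexI[of _ K]) (auto simp: states_def stream_def run_det_append)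
next
  assume "\<exists>D\<in>set Ds. \<exists>K\<in>Avoided. run_det D (stream X K) = Some a"
  then obtain i K where "i < length Ds" "K \<in> Avoided" "run_det (Ds ! i) (stream X K) = Some a"
    by (metis in_set_conv_nth)
  then show "a \<in> outputs Ds (states Ds X)"
    unfolding outputs_def by (auto simp: states_def stream_def run_det_append intro!: exI[of _ i])
qed

lemma outputs_states_subset:
  assumes "set Ds \<subseteq> set_pmf A" "X \<in> Prefixes"
  shows "outputs Ds (states Ds X) \<subseteq> X"
proof
  fix a assume "a \<in> outputs Ds (states Ds X)"
  then obtain D K where D: "D \<in> set Ds" "K \<in> Avoided" "run_det D (stream X K) = Some a"
    unfolding mem_outputs_states_iff by blast
  then have "is_dup (stream X K) a"
    using zero_error assms fd_input_stream[OF assms(2) D(2)] unfolding zero_error_def by fastforce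
  moreover have "finite X" using assms(2) finite_subset unfolding Prefixes_def by auto
  ultimately show "a \<in> X" by (rule is_dup_stream(1)[rotated])
qed

text \<open>The r elements hit along the chain are pairwise distinct: each one is a duplicate of
  a stream whose suffix avoids all the elements hit before.\<close>
lemma card_outputs_states_ge:
  assumes Ds: "set Ds \<subseteq> set_pmf A" and X: "X \<in> Prefixes"
    and cov: "\<forall>j<r. \<exists>D\<in>set Ds. covered D X j"
  shows "r \<le> card (outputs Ds (states Ds X))"
proof -
  have finX: "finite X" using X finite_subset unfolding Prefixes_def by auto
  have "\<exists>a. a \<in> chain X (Suc j) - chain X j \<and> a \<in> outputs Ds (states Ds X)" if j: "j < r" for j
  proof -
    let ?xs = "stream X (chain X j)"
    obtain D a where D: "D \<in> set Ds" "a \<in> canonical ?xs" "run_det D ?xs = Some a"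
      using cov j unfolding covered_def by blast
    have "fd_input n ?xs" using fd_input_stream[OF X chain_in_Avoided[OF X]] j by simp
    then have "is_dup ?xs a" using D(2) canonical(3) by blast
    then have "a \<notin> chain X j" using is_dup_stream(2)[OF finX] by blast
    moreover have "a \<in> outputs Ds (states Ds X)"
      unfolding mem_outputs_states_iff using D chain_in_Avoided[OF X, of j] j by auto
    ultimately show ?thesis using D(2) by auto
  qed
  then obtain f where f: "\<And>j. j < r \<Longrightarrow> f j \<in> chain X (Suc j) - chain X j \<and> f j \<in> outputs Ds (states Ds X)"
    by metis
  have "inj_on f {..<r}" using f by (intro inj_on_new_elements_of_chain[OF mono_chain]) blast
  moreover have "finite (outputs Ds (states Ds X))"
    using outputs_states_subset[OF Ds X] finX finite_subset by blast
  ultimately have "card {..<r} \<le> card (outputs Ds (states Ds X))"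
    using f by (intro card_inj_on_le[of f]) auto
  then show ?thesis by simp
qed

lemma binomial_le_by_sampled_states:
  assumes us: "uses_space n S A" and t: "2 * r \<le> 2 ^ t"
  shows "n choose prefix_size \<le> 2 * 2 ^ (S * t) * ((n - r) choose (prefix_size - r))"
proof -
  have fin: "finite Prefixes" unfolding Prefixes_def by (rule finite_subset[of _ "Pow {1..n}"]) auto
  obtain Ds where Ds: "length Ds = t" "set Ds \<subseteq> set_pmf A"
    and most: "card Prefixes \<le> 2 * card {X\<in>Prefixes. \<forall>j<r. \<exists>D\<in>set Ds. covered D X j}"
    using exists_samples_covering_most_rows[OF fin _ t, of A covered] prob_covered by auto
  let ?Codes = "{qs. set qs \<subseteq> {..<(2::nat) ^ S} \<and> length qs = t}"
  have "card {X\<in>Prefixes. \<forall>j<r. \<exists>D\<in>set Ds. covered D X j}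
      \<le> card ?Codes * ((card {1..n} - r) choose (prefix_size - r))"
  proof (rule card_le_card_codes_mult_binomial[where code = "states Ds" and decode = "outputs Ds"])
    fix X assume X: "X \<in> {X\<in>Prefixes. \<forall>j<r. \<exists>D\<in>set Ds. covered D X j}"
    then have "X \<subseteq> {1..n}" unfolding Prefixes_def by simp
    then have "set (sorted_list_of_set X) \<subseteq> {1..n}" using finite_subset by fastforce
    then have "states Ds X \<in> ?Codes"
      using state_after_less[OF us] Ds unfolding states_def by auto
    then show "X \<subseteq> {1..n} \<and> card X = prefix_size \<and> states Ds X \<in> ?Codes \<and>
        outputs Ds (states Ds X) \<subseteq> X \<and> r \<le> card (outputs Ds (states Ds X))"
      using X outputs_states_subset[OF Ds(2)] card_outputs_states_ge[OF Ds(2)]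
      unfolding Prefixes_def by auto
  qed (auto simp: finite_lists_length_eq)
  moreover have "card ?Codes = 2 ^ (S * t)" by (simp add: card_lists_length_eq power_mult)
  moreover have "card Prefixes = n choose prefix_size"
    unfolding Prefixes_def using n_subsets[of "{1..n}" prefix_size] by simp
  ultimately show ?thesis using most by simp
qed

theorem r_ln_four_thirds_le_space_ln:
  assumes us: "uses_space n S A"
  shows "real r * ln (4/3) \<le> ln 2 + real S * ln (real n)"
proof -
  obtain e where e: "2 ^ e \<le> r" "r < 2 ^ (e + 1)" using ex_power_ivl1[of 2 r] r_pos by auto
  define t where "t = e + 2"
  have t: "2 * r \<le> 2 ^ t" "2 ^ t \<le> 4 * r" using e unfolding t_def by auto
  let ?B = "real ((n - r) choose (prefix_size - r))"
  have B: "0 < ?B" using prefix_suffix_sizes by simp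
  have "(4/3) ^ r * ?B \<le> real (n choose prefix_size)"
    using prefix_suffix_sizes by (intro binomial_ge_four_thirds_power_mult) auto
  also have "\<dots> \<le> real (2 * 2 ^ (S * t) * ((n - r) choose (prefix_size - r)))"
    using binomial_le_by_sampled_states[OF us t(1)] by (simp only: of_nat_le_iff)
  also have "\<dots> = 2 * 2 ^ (S * t) * ?B" by simp
  finally have "(4/3) ^ r \<le> 2 * (2::real) ^ (S * t)" using B by simp
  then have "ln ((4/3) ^ r) \<le> ln (2 * (2::real) ^ (S * t))" by simp
  then have "real r * ln (4/3) \<le> ln 2 + real S * (real t * ln 2)"
    by (simp add: ln_mult ln_realpow mult.assoc)
  moreover have "real t * ln 2 \<le> ln (real n)"
  proof -
    have "4 * r \<le> 4 * k * r" using k_pos by simp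
    then have "real (2 ^ t) \<le> real n" using t(2) four_k_r_le by (simp only: of_nat_le_iff)
    then have "(2::real) ^ t \<le> real n" by simp
    then have "ln ((2::real) ^ t) \<le> ln (real n)" by (rule ln_mono) simp
    then show ?thesis by (simp add: ln_realpow)
  qed
  then have "real S * (real t * ln 2) \<le> real S * ln (real n)" by (rule mult_left_mono) simp
  ultimately show ?thesis by linarith
qed

end

lemma space_lower_bound:
  assumes n: "3 \<le> n" and ze: "zero_error n A" and pd: "pseudo_det n k A"
    and us: "uses_space n S A"
  shows "real n / real k \<le> 40 * (real S * ln (real n))"
proof -
  have k: "1 \<le> k" using pseudo_det_pos[OF _ pd] n by simp
  have "S \<noteq> 0" using not_uses_space_zero[OF _ ze pd] us n by (intro notI) simp
  moreover have "1 \<le> ln (real n)"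
  proof -
    have "exp 1 \<le> real n" using exp_le n by linarith
    then show ?thesis by (metis exp_gt_zero ln_exp ln_mono)
  qed
  ultimately have SL: "1 \<le> real S * ln (real n)"
    using mult_mono[of 1 "real S" 1 "ln (real n)"] by simp
  show ?thesis
  proof (cases "40 * k \<le> n")
    case False
    then have "real n / real k < 40" using k by (simp add: divide_simps)
    then show ?thesis using SL by linarith
  next
    case True
    define r where "r = n div (4 * k)"
    have "10 * (4 * k) div (4 * k) \<le> r" using True unfolding r_def by (intro div_le_mono) simp
    then have r: "10 \<le> r" using k by simp
    have "4 * k * r + n mod (4 * k) = n" unfolding r_def by (rule mult_div_mod_eq)
    moreover have "n mod (4 * k) < 4 * k" using k by simp
    ultimately have four_k_r_le: "4 * k * r \<le> n" and "n < 4 * k * (r + 1)" by simp_all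
    then have "real n < real (4 * k * (r + 1))" by (simp only: of_nat_less_iff)
    then have "real n < 4 * real k * (real r + 1)" by (simp add: algebra_simps)
    then have upper: "real n / real k < 4 * real r + 4" using k by (simp add: divide_simps algebra_simps)
    interpret find_duplicate_adversary n k r A
      using ze pd k r four_k_r_le by unfold_locales simp_all
    have "real r * (1/4) \<le> real r * ln (4/3)"
    proof (rule mult_left_mono)
      have "ln (3/4::real) \<le> 3/4 - 1" by (rule ln_le_minus_one) simp
      then show "1/4 \<le> ln (4/3::real)" by (simp add: ln_div)
    qed simp
    also have "\<dots> \<le> ln 2 + real S * ln (real n)" using r_ln_four_thirds_le_space_ln[OF us] .
    also have "\<dots> \<le> 1 + real S * ln (real n)" using ln_le_minus_one[of 2] by simp
    finally show ?thesis using upper SL by linarith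
  qed
qed

theorem mainTheorem5:
  shows "\<forall>C::real>0. \<exists>c::real>0. \<exists>N::nat. \<forall>n\<ge>N. \<forall>s::real>0. \<forall>k::nat. \<forall>A::rand_alg. \<forall>S::nat.
     real k \<le> C * real n / s \<longrightarrow> zero_error n A \<longrightarrow> pseudo_det n k A \<longrightarrow>
     uses_space n S A \<longrightarrow> real S \<ge> c * s / ln (real n)"
proof (intro allI impI)
  fix C :: real assume C: "0 < C"
  show "\<exists>c::real>0. \<exists>N::nat. \<forall>n\<ge>N. \<forall>s::real>0. \<forall>k::nat. \<forall>A::rand_alg. \<forall>S::nat.
     real k \<le> C * real n / s \<longrightarrow> zero_error n A \<longrightarrow> pseudo_det n k A \<longrightarrow>
     uses_space n S A \<longrightarrow> real S \<ge> c * s / ln (real n)"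
  proof (intro exI[of _ "1 / (40 * C)"] conjI exI[of _ "3::nat"] allI impI)
    fix n :: nat and s :: real and k :: nat and A :: rand_alg and S :: nat
    assume n: "3 \<le> n" and s: "0 < s" and hk: "real k \<le> C * real n / s"
      and ze: "zero_error n A" and pd: "pseudo_det n k A" and us: "uses_space n S A"
    have k: "1 \<le> k" using pseudo_det_pos[OF _ pd] n by simp
    have "s \<le> C * (real n / real k)" using hk s k by (simp add: field_simps)
    also have "\<dots> \<le> C * (40 * (real S * ln (real n)))"
      by (rule mult_left_mono[OF space_lower_bound[OF n ze pd us]]) (use C in simp)
    finally have "s \<le> 40 * C * real S * ln (real n)" by simp
    moreover have "0 < ln (real n)" using n by simp
    ultimately show "1 / (40 * C) * s / ln (real n) \<le> real S" using C by (simp add: field_simps)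
  qed (use C in simp)
qed

end
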